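(* Let $M\ge 1$, let $A$ be a real $M\times M$ matrix, let $g,U_0\in\mathbb{R}^M$, let $T>0$, and let $I$ denote the $M\times M$ identity matrix. Assume there exists a diagonal matrix $D\in\mathbb{R}^{M\times M}$ with positive diagonal entries such that $DA+A^{\mathrm T}D$ is negative semidefinite. For an integer $N\ge1$ put $\Delta t=T/N$ and consider the following two processes (all inequalities between vectors are componentwise, and maxima of vectors are componentwise). (Exact process, backward Euler LCP.) Vectors $U_n,\lambda_n\in\mathbb{R}^M$, $n=1,\dots,N$, satisfy, successively for $n=1,\dots,N$, $$(I-\Delta t A)U_n = U_{n-1}+\Delta t\, g+\Delta t\,\lambda_n,\qquad \lambda_n\ge 0,\quad U_n\ge U_0,\quad (U_n-U_0)^{\mathrm T}\lambda_n=0 .$$ (Ikonen--Toivanen splitting process.) Set $\widehat U_0=U_0$ and $\widehat\lambda_0=0$, and for $n=1,\dots,N$ let $\bar\lambda_n=\widehat\lambda_{n-1}$, let $\bar U_n$ solve $$(I-\Delta t A)\bar U_n=\widehat U_{n-1}+\Delta t\, g+\Delta t\,\bar\lambda_n,$$ and let $\widehat U_n,\widehat\lambda_n\in\mathbb{R}^M$ satisfy $$\widehat U_n-\bar U_n-\Delta t\,(\widehat\lambda_n-\bar\lambda_n)=0,\qquad \widehat\lambda_n\ge0,\quad \widehat U_n\ge U_0,\quad (\widehat U_n-U_0)^{\mathrm T}\widehat\lambda_n=0.$$ Assume further that there is a real constant $\nu$, independent of $\Delta t>0$, such that $$\|\lambda_1\|_D+\sum_{n=2}^{N}\|\lambda_n-\lambda_{n-1}\|_D\le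 \nu .$$ Then $$\max_{1\le n\le N}\|U_n-\widehat U_n\|_D\le \nu\,\Delta t$$ whenever $\Delta t=T/N$ with integer $N\ge1$.
   Context: For a diagonal matrix $D$ with positive diagonal entries, the scaled inner product on $\mathbb{R}^M$ is $\langle x,y\rangle_D=y^{\mathrm T}Dx$, and $\|x\|_D=\sqrt{\langle x,x\rangle_D}=\sqrt{x^{\mathrm T}Dx}$ is the induced vector norm. The exact process is the backward Euler ($\theta=1$) time discretization of the semidiscrete complementarity problem $U'\ge AU+g$, $U\ge U_0$, $(U-U_0)^{\mathrm T}(U'-AU-g)=0$, written with an auxiliary (Lagrange multiplier) vector $\lambda_n$; the splitting process replaces it by a linear solve followed by a componentwise update, with the multiplier of the previous step used as $\bar\lambda_n$. *)

theory Defs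
  imports "HOL-Analysis.Analysis"
begin

definition dnorm :: "real^'m^'m \<Rightarrow> real^'m \<Rightarrow> real" where
  "dnorm D x = sqrt (x \<bullet> (D *v x))"

end

theory Submission imports Defs begin

text \<open>
  Scaling by \<open>D\<^sup>1\<^sup>/\<^sup>2\<close> turns the \<open>D\<close>-geometry into the Euclidean one, in which the
  hypothesis on \<open>A\<close> says that \<open>A\<close> is dissipative, and complementarity says that
  \<open>U - U'\<close> and \<open>\<lambda> - \<lambda>'\<close> form an obtuse angle for any two complementary pairs.
  Track the error \<open>e\<^sub>n = \<widehat>U\<^sub>n - U\<^sub>n\<close> together with the multiplier error
  \<open>d\<^sub>n = \<Delta>t (\<widehat>\<lambda>\<^sub>n - \<lambda>\<^sub>n)\<close> through the energy \<open>E\<^sub>n = (\<parallel>e\<^sub>n\<parallel>\<^sup>2 + \<parallel>d\<^sub>n\<parallel>\<^sup>2)\<^sup>1\<^sup>/\<^sup>2\<close>.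
  By obtuseness \<open>E\<^sub>n \<le> \<parallel>e\<^sub>n - d\<^sub>n\<parallel>\<close>, and \<open>e\<^sub>n - d\<^sub>n\<close> is obtained from \<open>(e\<^sub>n\<^sub>-\<^sub>1, d\<^sub>n\<^sub>-\<^sub>1)\<close>
  by the resolvent \<open>(I - \<Delta>t A)\<^sup>-\<^sup>1\<close> of the dissipative \<open>A\<close>, which acts nonexpansively, up to the
  lag \<open>\<Delta>t (\<lambda>\<^sub>n - \<lambda>\<^sub>n\<^sub>-\<^sub>1)\<close> of the multiplier used by the splitting.  Hence
  \<open>E\<^sub>n \<le> E\<^sub>n\<^sub>-\<^sub>1 + \<Delta>t \<parallel>\<lambda>\<^sub>n - \<lambda>\<^sub>n\<^sub>-\<^sub>1\<parallel>\<close>, and summing gives the bound.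
\<close>

lemma norm_sq_add_le_norm_diff_sq:
  fixes x y :: "'a::real_inner"
  assumes "x \<bullet> y \<le> 0"
  shows "norm x ^ 2 + norm y ^ 2 \<le> norm (x - y) ^ 2"
proof -
  have "norm (x - y) ^ 2 = norm x ^ 2 + norm y ^ 2 - 2 * (x \<bullet> y)"
    by (simp add: power2_norm_eq_inner inner_diff_left inner_diff_right inner_commute)
  with assms show ?thesis by simp
qed

lemma norm_le_norm_diff_of_inner_nonpos:
  fixes p q :: "'a::real_inner"
  assumes "p \<bullet> q \<le> 0"
  shows "norm q \<le> norm (p - q)"
  using norm_sq_add_le_norm_diff_sq[OF assms]
  by (smt (verit) norm_ge_zero power2_le_imp_le zero_le_power2)

lemma norm_shift_sq_le_of_inner_nonpos:
  fixes p q b :: "'a::real_inner"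
  assumes "p \<bullet> q \<le> 0"
  shows "norm (p - b) ^ 2 \<le> norm (p - q - b) ^ 2 + norm b ^ 2"
proof -
  have "norm (p - b) ^ 2 = norm (p - q - b) ^ 2 + 2 * (p \<bullet> q) - norm (b + q) ^ 2 + norm b ^ 2"
    by (simp add: power2_norm_eq_inner inner_diff_left inner_diff_right inner_add_left
        inner_add_right inner_commute)
  with assms show ?thesis by (smt (verit) zero_le_power2)
qed

definition complementary :: "real^'m \<Rightarrow> real^'m \<Rightarrow> real^'m \<Rightarrow> bool" where
  "complementary \<psi> U lam \<longleftrightarrow> (\<forall>i. lam $ i \<ge> 0) \<and> (\<forall>i. U $ i \<ge> \<psi> $ i) \<and> (U - \<psi>) \<bullet> lam = 0"

lemma complementary_nth:
  assumes "complementary \<psi> U lam"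
  shows "(U $ i - \<psi> $ i) * lam $ i = 0"
proof -
  have "(\<Sum>j\<in>UNIV. (U $ j - \<psi> $ j) * lam $ j) = 0" and "\<forall>j. (U $ j - \<psi> $ j) * lam $ j \<ge> 0"
    using assms by (auto simp: complementary_def inner_vec_def)
  then show ?thesis by (simp add: sum_nonneg_eq_0_iff)
qed

lemma complementary_nth_monotone:
  assumes "complementary \<psi> U lam" "complementary \<psi> U' lam'"
  shows "(U $ i - U' $ i) * (lam $ i - lam' $ i) \<le> 0"
proof -
  have "(U $ i - U' $ i) * (lam $ i - lam' $ i)
      = (U $ i - \<psi> $ i) * lam $ i + (U' $ i - \<psi> $ i) * lam' $ i
        - (U $ i - \<psi> $ i) * lam' $ i - (U' $ i - \<psi> $ i) * lam $ i"
    by (simp add: algebra_simps)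
  also have "\<dots> = - ((U $ i - \<psi> $ i) * lam' $ i) - (U' $ i - \<psi> $ i) * lam $ i"
    using complementary_nth[OF assms(1), of i] complementary_nth[OF assms(2), of i] by linarith
  also have "\<dots> \<le> 0"
  proof -
    have "(U $ i - \<psi> $ i) * lam' $ i \<ge> 0" "(U' $ i - \<psi> $ i) * lam $ i \<ge> 0"
      using assms by (simp_all add: complementary_def)
    then show ?thesis by linarith
  qed
  finally show ?thesis .
qed

definition sqrt_diag_scale :: "real^'m^'m \<Rightarrow> real^'m \<Rightarrow> real^'m" where
  "sqrt_diag_scale D x = (\<chi> i. sqrt (D $ i $ i) * x $ i)"

lemma sqrt_diag_scale_add [simp]: "sqrt_diag_scale D (x + y) = sqrt_diag_scale D x + sqrt_diag_scale D y"
  and sqrt_diag_scale_diff [simp]: "sqrt_diag_scale D (x - y) = sqrt_diag_scale D x - sqrt_diag_scale D y"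
  and sqrt_diag_scale_scaleR [simp]: "sqrt_diag_scale D (c *\<^sub>R x) = c *\<^sub>R sqrt_diag_scale D x"
  and sqrt_diag_scale_0 [simp]: "sqrt_diag_scale D 0 = 0"
  by (auto simp: sqrt_diag_scale_def vec_eq_iff algebra_simps)

locale positive_diagonal =
  fixes D :: "real^'m^'m"
  assumes off_diag: "i \<noteq> j \<Longrightarrow> D $ i $ j = 0"
    and diag_pos: "D $ i $ i > 0"
begin

abbreviation S :: "real^'m \<Rightarrow> real^'m" where
  "S \<equiv> sqrt_diag_scale D"

lemma mult_vec_nth: "(D *v y) $ i = D $ i $ i * y $ i"
proof -
  have "(D *v y) $ i = (\<Sum>j\<in>UNIV. D $ i $ j * y $ j)"
    by (simp add: matrix_vector_mult_def)
  also have "\<dots> = (\<Sum>j\<in>UNIV. if j = i then D $ i $ i * y $ i else 0)"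
    by (rule sum.cong) (auto simp: off_diag)
  finally show ?thesis by simp
qed

lemma inner_mult_vec_eq: "x \<bullet> (D *v y) = S x \<bullet> S y"
proof -
  have "x $ i * (D $ i $ i * y $ i) = (sqrt (D $ i $ i) * x $ i) * (sqrt (D $ i $ i) * y $ i)" for i
    using diag_pos[of i] by (simp add: algebra_simps less_imp_le)
  then show ?thesis
    unfolding inner_vec_def inner_real_def sqrt_diag_scale_def vec_lambda_beta mult_vec_nth
    by (intro sum.cong refl)
qed

lemma dnorm_eq_norm: "dnorm D x = norm (S x)"
  by (simp add: dnorm_def inner_mult_vec_eq norm_eq_sqrt_inner)

lemma dnorm_scaleR: "dnorm D (c *\<^sub>R x) = \<bar>c\<bar> * dnorm D x"
  by (simp add: dnorm_eq_norm)

lemma dnorm_minus_commute: "dnorm D (x - y) = dnorm D (y - x)"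
  by (simp add: dnorm_eq_norm norm_minus_commute)

lemma sqrt_diag_scale_eq_0_iff: "S x = 0 \<longleftrightarrow> x = 0"
  using diag_pos by (auto simp: sqrt_diag_scale_def vec_eq_iff less_imp_neq[symmetric])

lemma complementary_inner_nonpos:
  assumes "complementary \<psi> U lam" "complementary \<psi> U' lam'"
  shows "S (U - U') \<bullet> S (lam - lam') \<le> 0"
proof -
  have "S (U - U') \<bullet> S (lam - lam') = (\<Sum>i\<in>UNIV. D $ i $ i * ((U $ i - U' $ i) * (lam $ i - lam' $ i)))"
    unfolding inner_mult_vec_eq[symmetric] by (simp add: inner_vec_def mult_vec_nth mult_ac)
  also have "\<dots> \<le> 0"
    using complementary_nth_monotone[OF assms] diag_pos
    by (intro sum_nonpos) (simp add: mult_nonneg_nonpos less_imp_le)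
  finally show ?thesis .
qed

end

lemma resolvent_mult_vec:
  fixes A :: "real^'n^'n"
  shows "(mat 1 - dt *\<^sub>R A) *v u = u - dt *\<^sub>R (A *v u)"
  by (simp add: matrix_vector_mult_diff_rdistrib scaleR_matrix_vector_assoc)

locale dissipative_matrix = positive_diagonal D for D :: "real^'m^'m" +
  fixes A :: "real^'m^'m"
  assumes dissipative: "x \<bullet> ((D ** A + transpose A ** D) *v x) \<le> 0"
begin

lemma inner_scaled_nonpos: "S u \<bullet> S (A *v u) \<le> 0"
proof -
  have "u \<bullet> ((D ** A + transpose A ** D) *v u) = u \<bullet> (D *v (A *v u)) + u \<bullet> (transpose A *v (D *v u))"
    by (simp add: matrix_vector_mult_add_rdistrib matrix_vector_mul_assoc inner_add_right)
  also have "u \<bullet> (transpose A *v (D *v u)) = (A *v u) \<bullet> (D *v u)"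
    by (metis dot_lmul_matrix inner_commute vector_transpose_matrix)
  also have "\<dots> = u \<bullet> (D *v (A *v u))"
    by (simp add: inner_mult_vec_eq inner_commute)
  finally show ?thesis
    using dissipative[of u] by (simp add: inner_mult_vec_eq)
qed

context
  fixes dt :: real
  assumes dt_nonneg: "dt \<ge> 0"
begin

lemma resolvent_inner_nonpos:
  assumes "(mat 1 - dt *\<^sub>R A) *v u = v"
  shows "S u \<bullet> S (u - v) \<le> 0"
  using inner_scaled_nonpos[of u] dt_nonneg assms
  by (auto simp: resolvent_mult_vec inner_scaleR_right mult_nonneg_nonpos)

lemma resolvent_surj: "\<exists>u. (mat 1 - dt *\<^sub>R A) *v u = v"
proof -
  have "x = 0" if "(mat 1 - dt *\<^sub>R A) *v x = 0" for x
  proof -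
    have "S x \<bullet> S x \<le> 0"
      using resolvent_inner_nonpos[OF that] by simp
    then show ?thesis
      by (metis inner_gt_zero_iff not_le sqrt_diag_scale_eq_0_iff)
  qed
  then obtain C where "C ** (mat 1 - dt *\<^sub>R A) = mat 1"
    using matrix_left_invertible_ker by blast
  then have "(mat 1 - dt *\<^sub>R A) ** C = mat 1"
    by (simp add: matrix_left_right_inverse)
  then show ?thesis
    using matrix_right_invertible_surjective by (metis surj_def)
qed

lemma resolvent_defect_le:
  assumes "(mat 1 - dt *\<^sub>R A) *v u = v"
  shows "dnorm D (u - v) \<le> dnorm D v"
  using norm_le_norm_diff_of_inner_nonpos[OF resolvent_inner_nonpos[OF assms]]
  by (simp add: dnorm_eq_norm)

lemma resolvent_shift_le:
  assumes "(mat 1 - dt *\<^sub>R A) *v u = v"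
  shows "dnorm D (u - d) ^ 2 \<le> dnorm D (v - d) ^ 2 + dnorm D d ^ 2"
  using norm_shift_sq_le_of_inner_nonpos[OF resolvent_inner_nonpos[OF assms], of "S d"]
  by (simp add: dnorm_eq_norm)

text \<open>In the application \<open>\<delta> = \<Delta>t (\<lambda>\<^sub>n - \<lambda>\<^sub>n\<^sub>-\<^sub>1)\<close> is the lag of the multiplier used by the splitting.\<close>

lemma resolvent_lagged_le:
  assumes "(mat 1 - dt *\<^sub>R A) *v u = e + d - \<delta>"
  shows "dnorm D (u - d + \<delta>) \<le> sqrt (dnorm D e ^ 2 + dnorm D d ^ 2) + dnorm D \<delta>"
proof -
  obtain u\<^sub>\<delta> where u\<^sub>\<delta>: "(mat 1 - dt *\<^sub>R A) *v u\<^sub>\<delta> = \<delta>"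
    using resolvent_surj by blast
  have u\<^sub>e: "(mat 1 - dt *\<^sub>R A) *v (u + u\<^sub>\<delta>) = e + d"
    using assms u\<^sub>\<delta> by (simp add: matrix_vector_right_distrib)
  have "dnorm D (u - d + \<delta>) \<le> dnorm D (u + u\<^sub>\<delta> - d) + dnorm D (u\<^sub>\<delta> - \<delta>)"
    using norm_triangle_ineq4[of "S (u + u\<^sub>\<delta> - d)" "S (u\<^sub>\<delta> - \<delta>)"]
    by (simp add: dnorm_eq_norm algebra_simps)
  also have "dnorm D (u + u\<^sub>\<delta> - d) \<le> sqrt (dnorm D e ^ 2 + dnorm D d ^ 2)"
    using resolvent_shift_le[OF u\<^sub>e, of d] by (simp add: real_le_rsqrt)
  also have "dnorm D (u\<^sub>\<delta> - \<delta>) \<le> dnorm D \<delta>"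
    using resolvent_defect_le[OF u\<^sub>\<delta>] .
  finally show ?thesis by simp
qed

lemma splitting_error_step:
  assumes exact: "(mat 1 - dt *\<^sub>R A) *v U = U\<^sub>p + dt *\<^sub>R g + dt *\<^sub>R lam"
    and linear: "(mat 1 - dt *\<^sub>R A) *v U\<^sub>b = U\<^sub>h\<^sub>p + dt *\<^sub>R g + dt *\<^sub>R lam\<^sub>h\<^sub>p"
    and update: "U\<^sub>h - U\<^sub>b - dt *\<^sub>R (lam\<^sub>h - lam\<^sub>h\<^sub>p) = 0"
    and "complementary \<psi> U lam" "complementary \<psi> U\<^sub>h lam\<^sub>h"
  shows "sqrt (dnorm D (U\<^sub>h - U) ^ 2 + dnorm D (dt *\<^sub>R (lam\<^sub>h - lam)) ^ 2)
      \<le> sqrt (dnorm D (U\<^sub>h\<^sub>p - U\<^sub>p) ^ 2 + dnorm D (dt *\<^sub>R (lam\<^sub>h\<^sub>p - lam\<^sub>p)) ^ 2)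
        + dnorm D (dt *\<^sub>R (lam - lam\<^sub>p))"
proof -
  have obtuse: "S (U\<^sub>h - U) \<bullet> S (dt *\<^sub>R (lam\<^sub>h - lam)) \<le> 0"
    using complementary_inner_nonpos[OF assms(5,4)] dt_nonneg
    by (simp only: sqrt_diag_scale_scaleR inner_scaleR_right mult_nonneg_nonpos)
  have "sqrt (dnorm D (U\<^sub>h - U) ^ 2 + dnorm D (dt *\<^sub>R (lam\<^sub>h - lam)) ^ 2)
      \<le> dnorm D (U\<^sub>h - U - dt *\<^sub>R (lam\<^sub>h - lam))"
    using norm_sq_add_le_norm_diff_sq[OF obtuse] by (intro real_le_lsqrt) (simp_all add: dnorm_eq_norm)
  also have "U\<^sub>h - U - dt *\<^sub>R (lam\<^sub>h - lam) = (U\<^sub>b - U) - dt *\<^sub>R (lam\<^sub>h\<^sub>p - lam\<^sub>p) + dt *\<^sub>R (lam - lam\<^sub>p)"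
    using update by (simp add: algebra_simps)
  also have "dnorm D \<dots> \<le> sqrt (dnorm D (U\<^sub>h\<^sub>p - U\<^sub>p) ^ 2 + dnorm D (dt *\<^sub>R (lam\<^sub>h\<^sub>p - lam\<^sub>p)) ^ 2)
        + dnorm D (dt *\<^sub>R (lam - lam\<^sub>p))"
    by (intro resolvent_lagged_le)
      (simp only: matrix_vector_mult_diff_distrib exact linear, simp add: algebra_simps)
  finally show ?thesis .
qed

lemma splitting_error_bound:
  fixes U lam U\<^sub>b U\<^sub>h lam\<^sub>h :: "nat \<Rightarrow> real^'m"
  assumes init: "U 0 = \<psi>" "U\<^sub>h 0 = \<psi>" "lam\<^sub>h 0 = 0"
    and exact: "\<And>k. k \<in> {1..n} \<Longrightarrow>
        (mat 1 - dt *\<^sub>R A) *v U k = U (k - 1) + dt *\<^sub>R g + dt *\<^sub>R lam k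
      \<and> complementary \<psi> (U k) (lam k)"
    and splitting: "\<And>k. k \<in> {1..n} \<Longrightarrow>
        (mat 1 - dt *\<^sub>R A) *v U\<^sub>b k = U\<^sub>h (k - 1) + dt *\<^sub>R g + dt *\<^sub>R lam\<^sub>h (k - 1)
      \<and> U\<^sub>h k - U\<^sub>b k - dt *\<^sub>R (lam\<^sub>h k - lam\<^sub>h (k - 1)) = 0
      \<and> complementary \<psi> (U\<^sub>h k) (lam\<^sub>h k)"
    and "n \<ge> 1"
  shows "dnorm D (U n - U\<^sub>h n) \<le> dt * (dnorm D (lam 1) + (\<Sum>k=2..n. dnorm D (lam k - lam (k - 1))))"
proof -
  \<comment> \<open>the exact process has no \<open>\<lambda>\<^sub>0\<close>; take it to be \<open>0\<close>, like \<open>\<widehat>\<lambda>\<^sub>0\<close>\<close>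
  define L where "L k = (if k = 0 then 0 else lam k)" for k
  define E where "E k = sqrt (dnorm D (U\<^sub>h k - U k) ^ 2 + dnorm D (dt *\<^sub>R (lam\<^sub>h k - L k)) ^ 2)" for k
  have energy: "E k \<le> (\<Sum>j=1..k. dnorm D (dt *\<^sub>R (L j - L (j - 1))))" if "k \<le> n" for k
    using that
  proof (induction k)
    case 0
    then show ?case by (simp add: E_def L_def init dnorm_eq_norm)
  next
    case (Suc k)
    have "E (Suc k) \<le> E k + dnorm D (dt *\<^sub>R (L (Suc k) - L k))"
      unfolding E_def
      by (rule splitting_error_step) (use exact[of "Suc k"] splitting[of "Suc k"] Suc.prems in \<open>auto simp: L_def\<close>)
    then show ?case
      using Suc by simp
  qed
  have "dnorm D (U n - U\<^sub>h n) \<le> E n"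
    by (simp add: E_def dnorm_minus_commute real_le_rsqrt)
  also have "\<dots> \<le> (\<Sum>j=1..n. dnorm D (dt *\<^sub>R (L j - L (j - 1))))"
    using energy by simp
  also have "\<dots> = dt * (dnorm D (lam 1) + (\<Sum>k=2..n. dnorm D (lam k - lam (k - 1))))"
    using \<open>n \<ge> 1\<close> dt_nonneg
    by (simp add: sum.atLeast_Suc_atMost L_def dnorm_scaleR sum_distrib_left distrib_left
        numeral_2_eq_2)
  finally show ?thesis .
qed

end

end

theorem theorem1:
  fixes A D :: "real^'m^'m" and g U0 :: "real^'m" and T :: real
    and U lam Ub Uh lamh :: "nat \<Rightarrow> nat \<Rightarrow> real^'m"
  assumes T_pos: "T > 0"
    and D_diag: "\<forall>i j. i \<noteq> j \<longrightarrow> D $ i $ j = 0"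
    and D_pos: "\<forall>i. D $ i $ i > 0"
    and negsemidef: "\<forall>x. x \<bullet> ((D ** A + transpose A ** D) *v x) \<le> 0"
    and exact: "\<forall>N\<ge>1. U N 0 = U0 \<and>
        (\<forall>n\<in>{1..N}.
           (mat 1 - (T / real N) *\<^sub>R A) *v U N n
             = U N (n - 1) + (T / real N) *\<^sub>R g + (T / real N) *\<^sub>R lam N n
         \<and> (\<forall>i. lam N n $ i \<ge> 0) \<and> (\<forall>i. U N n $ i \<ge> U0 $ i)
         \<and> (U N n - U0) \<bullet> lam N n = 0)"
    and splitting: "\<forall>N\<ge>1. Uh N 0 = U0 \<and> lamh N 0 = 0 \<and>
        (\<forall>n\<in>{1..N}.
           (mat 1 - (T / real N) *\<^sub>R A) *v Ub N n
             = Uh N (n - 1) + (T / real N) *\<^sub>R g + (T / real N) *\<^sub>R lamh N (n - 1)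
         \<and> Uh N n - Ub N n - (T / real N) *\<^sub>R (lamh N n - lamh N (n - 1)) = 0
         \<and> (\<forall>i. lamh N n $ i \<ge> 0) \<and> (\<forall>i. Uh N n $ i \<ge> U0 $ i)
         \<and> (Uh N n - U0) \<bullet> lamh N n = 0)"
    and nu_bound: "\<forall>N\<ge>1. dnorm D (lam N 1)
        + (\<Sum>n=2..N. dnorm D (lam N n - lam N (n - 1))) \<le> \<nu>"
  shows "\<forall>N\<ge>1. Max ((\<lambda>n. dnorm D (U N n - Uh N n)) ` {1..N}) \<le> \<nu> * (T / real N)"
proof (intro allI impI)
  fix N :: nat
  assume N: "N \<ge> 1"
  interpret dissipative_matrix D A
    using D_diag D_pos negsemidef by unfold_locales auto
  have dt: "T / real N \<ge> 0"
    using T_pos by simp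
  have "dnorm D (U N n - Uh N n) \<le> \<nu> * (T / real N)" if n: "n \<in> {1..N}" for n
  proof -
    have "dnorm D (U N n - Uh N n)
        \<le> T / real N * (dnorm D (lam N 1) + (\<Sum>k=2..n. dnorm D (lam N k - lam N (k - 1))))"
      using n exact[rule_format, OF N] splitting[rule_format, OF N]
      by (intro splitting_error_bound[OF dt,
            where U\<^sub>b = "Ub N" and lam\<^sub>h = "lamh N" and g = g and \<psi> = U0])
        (simp_all add: complementary_def)
    also have "\<dots> \<le> T / real N * (dnorm D (lam N 1) + (\<Sum>k=2..N. dnorm D (lam N k - lam N (k - 1))))"
      using n by (intro mult_left_mono add_left_mono sum_mono2 dt) (auto simp: dnorm_eq_norm)
    also have "\<dots> \<le> T / real N * \<nu>"
      using nu_bound N dt by (intro mult_left_mono) auto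
    finally show ?thesis
      by (simp add: mult.commute)
  qed
  then show "Max ((\<lambda>n. dnorm D (U N n - Uh N n)) ` {1..N}) \<le> \<nu> * (T / real N)"
    using N by (subst Max_le_iff) auto
qed

end
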